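(* Let $m,n\ge 1$ and let $k>0$ and $l$ be fixed integers. Let $P,Q$ be constant $n\times n$ complex matrices, let $\mathfrak{R}(P)$ be a finite set of distinct invertible constant $n\times n$ matrices $\Lambda$ with $-(\Lambda^{k}+\Lambda^{k-l})=P$, and let $\mathfrak{R}(Q)$ be a finite set of distinct invertible constant $n\times n$ matrices $\tilde\Lambda$ with $-(\tilde\Lambda^{k}+\tilde\Lambda^{k-l})=Q$. For each $\Lambda\in\mathfrak{R}(P)$ let $A_\Lambda$ be a constant $m\times n$ matrix, for each $\tilde\Lambda\in\mathfrak{R}(Q)$ let $B_{\tilde\Lambda}$ be a constant $n\times m$ matrix, and for each pair let $X_{\tilde\Lambda,\Lambda}$ be a constant $n\times n$ matrix satisfying $\tilde\Lambda^{-l}X_{\tilde\Lambda,\Lambda}\Lambda^{l}-X_{\tilde\Lambda,\Lambda}=B_{\tilde\Lambda}A_\Lambda$. Let $\tilde\omega$ be a constant $n\times n$ matrix and set $\gamma_1=\tilde\omega P-Q\tilde\omega$. Define $$\theta=\sum_{\Lambda\in\mathfrak{R}(P)}A_\Lambda e^{\Lambda^l t}\Lambda^j,\qquad \eta=\sum_{\tilde\Lambda\in\mathfrak{R}(Q)}e^{-\tilde\Lambda^l t}\tilde\Lambda^{-j}B_{\tilde\Lambda},$$ $$\tilde\Omega=\sum_{\Lambda\in\mathfrak{R}(P),\,\tilde\Lambda\in\mathfrak{R}(Q)}e^{-\tilde\Lambda^l t}\tilde\Lambda^{-j}X_{\tilde\Lambda,\Lambda}e^{\Lambda^l t}\Lambda^j+\tilde\omega,$$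 and assume $\tilde\Omega$ is invertible. Let $\varphi_0$ be a constant $m\times m$ matrix. Then $$\varphi=\varphi_0+\theta\,\tilde\Omega^{-1}\eta_{(-l)},\qquad \hat q=-\theta\,\tilde\Omega^{-1}\gamma_1,\qquad \tilde r=-\tilde\Omega_{(l)}^{-1}\eta$$ solve the system $$(\varphi_{(k)}-\varphi)_t+(\varphi_{(k)}-\varphi+I)(\varphi_{(l)}-\varphi)_{(k-l)}-(\varphi_{(l)}-\varphi)(\varphi_{(k)}-\varphi+I)=(\hat q_{(l)}\tilde r_{(k-l)})_{(-l)}-\hat q_{(l)}\tilde r_{(k-l)},$$ $$\hat q_t=\hat q_{(l)}+(\varphi_{(l)}-\varphi)\,\hat q,\qquad \tilde r_t=-\tilde r_{(-l)}-\tilde r\,(\varphi_{(l)}-\varphi).$$ Consequently $W=\varphi_{(1)}-\varphi+\frac1k I$ together with $\hat q,\tilde r$ solves $$\Big(\sum_{i=0}^{k-1}W_{(i)}\Big)_t+\sum_{i=0}^{k-1}W_{(i)}\sum_{i=k-l}^{k-1}W_{(i)}-\sum_{i=0}^{l-1}W_{(i)}\sum_{i=0}^{k-1}W_{(i)}=(\hat q_{(l)}\tilde r_{(k-l)})_{(-l)}-\hat q_{(l)}\tilde r_{(k-l)},$$ $$\hat q_t=\hat q_{(l)}+\Big(\sum_{i=0}^{l-1}W_{(i)}-\tfrac{l}{k}I\Big)\hat q,\qquad \tilde r_t=-\tilde r_{(-l)}-\tilde r\Big(\sum_{i=0}^{l-1}W_{(i)}-\tfrac{l}{k}I\Big).$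$
   Context: All dependent variables are matrix-valued functions of a continuous variable $t$ and a discrete variable $j\in\mathbb{Z}$; subscript $t$ denotes the derivative with respect to $t$, and for an integer $s$, $f_{(s)}(t,j)=f(t,j+s)$ denotes the shifted function. $I$ denotes the identity matrix. *)

theory Defs
  imports "HOL-Analysis.Analysis"
begin

fun mpow :: "'a::semiring_1^'n^'n \<Rightarrow> nat \<Rightarrow> 'a^'n^'n" where
  "mpow M 0 = mat 1"
| "mpow M (Suc k) = M ** mpow M k"

definition mpowi :: "'a::semiring_1^'n^'n \<Rightarrow> int \<Rightarrow> 'a^'n^'n" where
  "mpowi M z = (if 0 \<le> z then mpow M (nat z) else mpow (matrix_inv M) (nat (- z)))"

definition mexp :: "complex^'n^'n \<Rightarrow> complex^'n^'n" where
  "mexp M = (\<Sum>i. (1 / fact i) *\<^sub>R mpow M i)"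

text \<open>Oriented integer sum  sum_{i=a}^{b} f i , with the convention
  sum_{i=a}^{b} = - sum_{i=b+1}^{a-1} when b < a - 1 (empty when b = a - 1).\<close>
definition isum :: "(int \<Rightarrow> 'a::ab_group_add) \<Rightarrow> int \<Rightarrow> int \<Rightarrow> 'a" where
  "isum f a b = (if a \<le> b + 1 then (\<Sum>i\<in>{a..b}. f i) else - (\<Sum>i\<in>{b+1..a-1}. f i))"

end

theory Submission
  imports Defs
begin

text \<open>
  The functions \<theta>, \<eta>, \<Omega> satisfy a closed system of relations, each of which is checked
  summand by summand: the dispersion laws \<theta>_t = \<theta>_(l), \<eta>_t = -\<eta>_(-l), \<Omega>_t = \<eta>_(-l) \<theta>;
  the shift relation \<Omega>_(l) = \<Omega> + \<eta> \<theta> (from the equation for X); the recurrences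
  \<theta>_(k) + \<theta>_(k-l) = -\<theta> P and Q \<eta> = -(\<eta>_(-k) + \<eta>_(l-k)) (from -(\<Lambda>^k + \<Lambda>^(k-l)) = P
  and its analogue for Q); and the Sylvester-type relation \<Omega> P - Q \<Omega>_(k) = \<gamma>1 + \<eta> \<theta>_(k-l).
  The theorem is an algebraic consequence of these relations and (\<Omega>^-1)_t = -\<Omega>^-1 \<Omega>_t \<Omega>^-1:
  the shift relation gives \<Omega>^-1 = \<Omega>_(l)^-1 + \<Omega>_(l)^-1 \<eta> \<theta> \<Omega>^-1, and the Sylvester relation
  rewrites \<Omega>^-1 \<gamma>1 \<Omega>_(k-l)^-1, which is where the products of q and r come from.
  The system for W follows by telescoping, since the sum of W_(i) over a \<le> i \<le> b is
  \<phi>_(b+1) - \<phi>_(a) + (b - a + 1)/k I.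
\<close>

lemma matrix_add_rdistrib: "((A::'a::semiring_1^'n^'m) + B) ** C = A ** C + B ** C"
  by (simp add: matrix_matrix_mult_def vec_eq_iff distrib_right sum.distrib)

lemma matrix_diff_ldistrib: "(A::'a::ring_1^'n^'m) ** (B - C) = A ** B - A ** C"
  by (simp add: matrix_matrix_mult_def vec_eq_iff right_diff_distrib sum_subtractf)

lemma matrix_diff_rdistrib: "((A::'a::ring_1^'n^'m) - B) ** C = A ** C - B ** C"
  by (simp add: matrix_matrix_mult_def vec_eq_iff left_diff_distrib sum_subtractf)

lemma matrix_mul_minus_left: "(- (A::'a::ring_1^'n^'m)) ** B = - (A ** B)"
  by (simp add: matrix_matrix_mult_def vec_eq_iff sum_negf)

lemma matrix_mul_minus_right: "(A::'a::ring_1^'n^'m) ** (- B) = - (A ** B)"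
  by (simp add: matrix_matrix_mult_def vec_eq_iff sum_negf)

lemmas matrix_distribs = matrix_add_ldistrib matrix_add_rdistrib matrix_diff_ldistrib
  matrix_diff_rdistrib matrix_mul_minus_left matrix_mul_minus_right

lemma matrix_mul_sum_left: "(\<Sum>x\<in>S. f x) ** (C::'a::semiring_1^'p^'n) = (\<Sum>x\<in>S. f x ** C)"
  by (induction S rule: infinite_finite_induct) (auto simp: matrix_add_rdistrib)

lemma matrix_mul_sum_right: "(C::'a::semiring_1^'n^'m) ** (\<Sum>x\<in>S. f x) = (\<Sum>x\<in>S. C ** f x)"
  by (induction S rule: infinite_finite_induct) (auto simp: matrix_add_ldistrib)

lemma matrix_mul_scaleR_mat1: "(A::'a::real_algebra_1^'n^'m) ** (c *\<^sub>R mat 1) = c *\<^sub>R A"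
  by (simp add: matrix_scalar_ac)

lemma scaleR_mat1_matrix_mul: "(c *\<^sub>R mat 1) ** (A::'a::real_algebra_1^'n^'m) = c *\<^sub>R A"
  by (simp flip: scalar_matrix_assoc)

lemma matrix_inv_right: "invertible (A::'a::semiring_1^'n^'m) \<Longrightarrow> A ** matrix_inv A = mat 1"
  unfolding invertible_def matrix_inv_def by (erule someI2_ex) simp

lemma matrix_inv_left: "invertible (A::'a::semiring_1^'n^'m) \<Longrightarrow> matrix_inv A ** A = mat 1"
  unfolding invertible_def matrix_inv_def by (erule someI2_ex) simp

lemma bounded_bilinear_matrix_mul:
  "bounded_bilinear (\<lambda>(A::complex^'n^'m) (B::complex^'p^'n). A ** B)"
proof -
  have "bilinear (\<lambda>(A::complex^'n^'m) (B::complex^'p^'n). A ** B)"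
    unfolding bilinear_def
    by (auto intro!: linearI simp: matrix_add_ldistrib matrix_add_rdistrib matrix_scalar_ac
        scalar_matrix_assoc)
  then show ?thesis
    using bilinear_conv_bounded_bilinear by blast
qed

lemma mpow_commute: "C ** M = M ** C \<Longrightarrow> C ** mpow M n = mpow M n ** C"
  by (induction n) (simp_all add: matrix_mul_assoc, metis matrix_mul_assoc)

lemma mpowi_0 [simp]: "mpowi M 0 = mat 1"
  by (simp add: mpowi_def)

lemma mpowi_commute_base:
  fixes M :: "'a::field^'n^'n"
  assumes "invertible M"
  shows "mpowi M a ** M = M ** mpowi M a"
proof -
  have "M ** matrix_inv M = matrix_inv M ** M"
    by (simp add: matrix_inv_left matrix_inv_right assms)
  then show ?thesis
    unfolding mpowi_def using mpow_commute[of M M] mpow_commute[of M "matrix_inv M"] by auto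
qed

lemma mpowi_add1:
  fixes M :: "'a::field^'n^'n"
  assumes "invertible M"
  shows "mpowi M (a + 1) = mpowi M a ** M"
proof (cases "a \<ge> 0")
  case True
  then have "nat (a + 1) = Suc (nat a)" by simp
  with True show ?thesis
    using mpowi_commute_base[OF assms, of a] by (simp add: mpowi_def)
next
  case False
  then have "nat (- a) = Suc (nat (- (a + 1)))" by simp
  then have "M ** mpowi M a = M ** matrix_inv M ** mpow (matrix_inv M) (nat (- (a + 1)))"
    using False by (simp add: mpowi_def matrix_mul_assoc)
  also have "\<dots> = mpowi M (a + 1)"
    using False by (cases "a = -1") (auto simp: mpowi_def matrix_inv_right[OF assms])
  finally show ?thesis
    using mpowi_commute_base[OF assms, of a] by simp
qed

lemma mpowi_diff1:
  fixes M :: "'a::field^'n^'n"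
  assumes "invertible M"
  shows "mpowi M (a - 1) = mpowi M a ** matrix_inv M"
  using mpowi_add1[OF assms, of "a - 1"]
  by (simp flip: matrix_mul_assoc add: matrix_inv_right[OF assms])

lemma mpowi_add:
  fixes M :: "'a::field^'n^'n"
  assumes "invertible M"
  shows "mpowi M a ** mpowi M b = mpowi M (a + b)"
proof (induction b rule: int_induct[where k = 0])
  case (step1 i)
  then show ?case
    by (simp add: mpowi_add1[OF assms] matrix_mul_assoc add.assoc[symmetric])
next
  case (step2 i)
  have "mpowi M a ** mpowi M (i - 1) = mpowi M (a + i) ** matrix_inv M"
    using step2 by (simp add: mpowi_diff1[OF assms] matrix_mul_assoc)
  also have "\<dots> = mpowi M (a + (i - 1))"
    using mpowi_diff1[OF assms, of "a + i"] by (simp add: algebra_simps)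
  finally show ?case .
qed simp

lemma mpowi_commute:
  fixes M :: "'a::field^'n^'n"
  assumes "invertible M"
  shows "mpowi M a ** mpowi M b = mpowi M b ** mpowi M a"
  by (simp add: mpowi_add[OF assms] add.commute)

section \<open>Derivatives of matrix-valued functions\<close>

lemma has_vector_derivative_componentwise:
  fixes f :: "real \<Rightarrow> 'a::real_normed_vector^'i"
  shows "(f has_vector_derivative D) (at t) \<longleftrightarrow>
    (\<forall>i. ((\<lambda>s. f s $ i) has_vector_derivative D $ i) (at t))"
proof
  assume "(f has_vector_derivative D) (at t)"
  then show "\<forall>i. ((\<lambda>s. f s $ i) has_vector_derivative D $ i) (at t)"
    using bounded_linear.has_vector_derivative[OF bounded_linear_vec_nth] by blast
next
  assume "\<forall>i. ((\<lambda>s. f s $ i) has_vector_derivative D $ i) (at t)"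
  then have "((\<lambda>y. ((f y $ i - f t $ i) - (y - t) *\<^sub>R D $ i) /\<^sub>R norm (y - t)) \<longlongrightarrow> 0) (at t)" for i
    unfolding has_vector_derivative_def has_derivative_at_within by simp
  then have "((\<lambda>y. ((f y - f t) - (y - t) *\<^sub>R D) /\<^sub>R norm (y - t)) \<longlongrightarrow> 0) (at t)"
    by (intro vec_tendstoI) simp
  then show "(f has_vector_derivative D) (at t)"
    unfolding has_vector_derivative_def has_derivative_at_within
    by (simp add: bounded_linear_scaleR_left)
qed

lemma has_vector_derivative_matrix_entries:
  fixes f :: "real \<Rightarrow> 'a::real_normed_vector^'i^'j"
  shows "(f has_vector_derivative D) (at t) \<longleftrightarrow>
    (\<forall>i j. ((\<lambda>s. f s $ i $ j) has_vector_derivative D $ i $ j) (at t))"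
  by (simp add: has_vector_derivative_componentwise[of f]
      has_vector_derivative_componentwise[of "\<lambda>s. f s $ _"])

lemma has_vector_derivative_matrix_mul:
  fixes F :: "real \<Rightarrow> complex^'n^'m" and G :: "real \<Rightarrow> complex^'p^'n"
  assumes "(F has_vector_derivative F') (at t)" "(G has_vector_derivative G') (at t)"
  shows "((\<lambda>s. F s ** G s) has_vector_derivative F' ** G t + F t ** G') (at t)"
  using bounded_bilinear.has_vector_derivative[OF bounded_bilinear_matrix_mul assms]
  by (simp add: add.commute)

lemma has_vector_derivative_matrix_mul_left:
  fixes F :: "real \<Rightarrow> complex^'p^'n"
  shows "(F has_vector_derivative F') (at t) \<Longrightarrow>
    ((\<lambda>s. (C::complex^'n^'m) ** F s) has_vector_derivative C ** F') (at t)"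
  using bounded_linear.has_vector_derivative
    [OF bounded_bilinear.bounded_linear_right[OF bounded_bilinear_matrix_mul]] .

lemma has_vector_derivative_matrix_mul_right:
  fixes F :: "real \<Rightarrow> complex^'n^'m"
  shows "(F has_vector_derivative F') (at t) \<Longrightarrow>
    ((\<lambda>s. F s ** (C::complex^'p^'n)) has_vector_derivative F' ** C) (at t)"
  using bounded_linear.has_vector_derivative
    [OF bounded_bilinear.bounded_linear_left[OF bounded_bilinear_matrix_mul]] .

lemma differentiable_prod:
  fixes f :: "'i \<Rightarrow> real \<Rightarrow> 'a::real_normed_field"
  shows "(\<And>i. i \<in> I \<Longrightarrow> f i differentiable (at t)) \<Longrightarrow> (\<lambda>s. \<Prod>i\<in>I. f i s) differentiable (at t)"
  by (induction I rule: infinite_finite_induct) auto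

lemma differentiable_det:
  fixes M :: "real \<Rightarrow> complex^'n^'n"
  assumes "\<And>i j. (\<lambda>s. M s $ i $ j) differentiable (at t)"
  shows "(\<lambda>s. det (M s)) differentiable (at t)"
  unfolding det_def
  by (intro differentiable_sum differentiable_mult differentiable_const differentiable_prod ballI assms)
    (simp_all add: finite_permutations)

lemma matrix_inv_entry:
  fixes A :: "'a::field^'n^'n"
  assumes "invertible A"
  shows "matrix_inv A $ r $ c =
    det (\<chi> i j. if j = r then (if i = c then 1 else 0) else A $ i $ j) / det A"
proof -
  define x where "x = (\<chi> i. matrix_inv A $ i $ c)"
  have "A *v x = (\<chi> i. (A ** matrix_inv A) $ i $ c)"
    by (simp add: x_def matrix_vector_mult_def matrix_matrix_mult_def)
  then have "A *v x = (\<chi> i. if i = c then 1 else 0)"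
    by (simp add: matrix_inv_right[OF assms] mat_def)
  moreover have "det A \<noteq> 0"
    using assms invertible_det_nz by blast
  ultimately have "x $ r = det (\<chi> i j. if j = r then (\<chi> i. if i = c then 1 else 0) $ i
      else A $ i $ j) / det A"
    by (simp add: cramer)
  also have "(\<chi> i j. if j = r then (\<chi> i. if i = c then 1 else 0) $ i else A $ i $ j) =
      (\<chi> i j. if j = r then (if i = c then 1 else 0) else A $ i $ j)"
    by (simp add: vec_eq_iff)
  finally show ?thesis
    by (simp add: x_def)
qed

lemma differentiable_matrix_inv_entry:
  fixes F :: "real \<Rightarrow> complex^'n^'n"
  assumes "\<And>s. invertible (F s)" and "\<And>i j. (\<lambda>s. F s $ i $ j) differentiable (at t)"
  shows "(\<lambda>s. matrix_inv (F s) $ r $ c) differentiable (at t)"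
proof -
  have "(\<lambda>s. (\<chi> i j. if j = r then (if i = c then 1 else 0) else F s $ i $ j) $ i $ j)
      differentiable (at t)" for i j :: 'n
    by (cases "j = r") (auto simp: assms(2))
  then have "(\<lambda>s. det (\<chi> i j. if j = r then (if i = c then 1 else 0) else F s $ i $ j) / det (F s))
      differentiable (at t)"
    using assms(1)[of t] invertible_det_nz
    by (intro differentiable_divide differentiable_det assms(2)) auto
  then show ?thesis
    by (simp add: matrix_inv_entry[OF assms(1)])
qed

lemma has_vector_derivative_matrix_inv:
  fixes F :: "real \<Rightarrow> complex^'n^'n"
  assumes inv: "\<And>s. invertible (F s)" and dF: "(F has_vector_derivative F') (at t)"
  shows "((\<lambda>s. matrix_inv (F s)) has_vector_derivative
    - (matrix_inv (F t) ** F' ** matrix_inv (F t))) (at t)"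
proof -
  define G where "G = (\<lambda>s. matrix_inv (F s))"
  define G' where "G' = (\<chi> r c. vector_derivative (\<lambda>s. G s $ r $ c) (at t))"
  have "(\<lambda>s. F s $ i $ j) differentiable (at t)" for i j
    using dF differentiableI_vector has_vector_derivative_matrix_entries by blast
  then have "(\<lambda>s. G s $ r $ c) differentiable (at t)" for r c
    unfolding G_def by (rule differentiable_matrix_inv_entry[OF inv])
  then have dG: "(G has_vector_derivative G') (at t)"
    by (simp add: has_vector_derivative_matrix_entries G'_def vector_derivative_works[symmetric])
  have "((\<lambda>s. F s ** G s) has_vector_derivative F' ** G t + F t ** G') (at t)"
    by (rule has_vector_derivative_matrix_mul[OF dF dG])
  moreover have "(\<lambda>s. F s ** G s) = (\<lambda>s. mat 1)"
    by (simp add: G_def matrix_inv_right[OF inv])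
  ultimately have "((\<lambda>s. mat 1) has_vector_derivative F' ** G t + F t ** G') (at t)"
    by simp
  then have "F' ** G t + F t ** G' = 0"
    using vector_derivative_unique_at has_vector_derivative_const by blast
  then have "F t ** G' = - (F' ** G t)"
    by (simp add: eq_neg_iff_add_eq_0 add.commute)
  moreover have "G' = G t ** (F t ** G')"
    by (simp add: matrix_mul_assoc G_def matrix_inv_left[OF inv])
  ultimately have "G' = - (G t ** F' ** G t)"
    by (simp add: matrix_mul_minus_right matrix_mul_assoc)
  then show ?thesis
    using dG by (simp add: G_def)
qed

section \<open>The exponential \<open>t \<mapsto> mexp (t *\<^sub>R N)\<close>\<close>

lemma mpow_scaleR: "mpow (c *\<^sub>R (N::complex^'n^'n)) i = (c ^ i) *\<^sub>R mpow N i"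
  by (induction i) (simp_all add: matrix_scalar_ac scalar_matrix_assoc[symmetric])

lemma norm_mpow_le:
  fixes N :: "complex^'n^'n"
  obtains K where "K > 0" "\<And>i. norm (mpow N i) \<le> norm (mat 1 :: complex^'n^'n) * (K * norm N) ^ i"
proof -
  obtain K where K: "K > 0"
    "\<forall>A B. norm ((A :: complex^'n^'n) ** (B :: complex^'n^'n)) \<le> norm A * norm B * K"
  proof -
    have "bounded_bilinear (\<lambda>A B :: complex^'n^'n. A ** B)"
      by (rule bounded_bilinear_matrix_mul)
    then show ?thesis
      using that bounded_bilinear.pos_bounded by blast
  qed
  have "norm (mpow N i) \<le> norm (mat 1 :: complex^'n^'n) * (K * norm N) ^ i" for i
  proof (induction i)
    case (Suc i)
    have "norm (mpow N (Suc i)) \<le> norm N * norm (mpow N i) * K"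
      using K(2) by simp
    also have "\<dots> \<le> norm N * (norm (mat 1 :: complex^'n^'n) * (K * norm N) ^ i) * K"
      using Suc K(1) by (simp add: mult_right_mono mult_left_mono)
    finally show ?case
      by (simp add: algebra_simps)
  qed simp
  with K(1) show ?thesis
    using that by blast
qed

definition mexp_coeff :: "complex^'n^'n \<Rightarrow> 'n \<Rightarrow> 'n \<Rightarrow> nat \<Rightarrow> complex" where
  "mexp_coeff N a b i = mpow N i $ a $ b / fact i"

lemma summable_mexp_coeff:
  fixes N :: "complex^'n^'n"
  shows "summable (\<lambda>i. mexp_coeff N a b i * z ^ i)"
proof -
  obtain K where K: "K > 0" "\<And>i. norm (mpow N i) \<le> norm (mat 1 :: complex^'n^'n) * (K * norm N) ^ i"
    using norm_mpow_le by blast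
  let ?C = "norm (mat 1 :: complex^'n^'n)"
  have "norm (mexp_coeff N a b i * z ^ i) \<le> ?C * (inverse (fact i) * (K * norm N * norm z) ^ i)" for i
  proof -
    have "norm (mexp_coeff N a b i * z ^ i) = norm (mpow N i $ a $ b) * norm z ^ i / fact i"
      by (simp add: mexp_coeff_def norm_mult norm_divide norm_power)
    also have "\<dots> \<le> ?C * (K * norm N) ^ i * norm z ^ i / fact i"
    proof -
      have "norm (mpow N i $ a $ b) \<le> norm (mpow N i)"
        by (rule order_trans[OF Finite_Cartesian_Product.norm_nth_le Finite_Cartesian_Product.norm_nth_le])
      with K(2)[of i] show ?thesis
        by (intro divide_right_mono mult_right_mono) auto
    qed
    finally show ?thesis
      by (simp add: power_mult_distrib field_simps)
  qed
  then show ?thesis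
    by (rule summable_comparison_test'[OF summable_mult[OF summable_exp]])
qed

lemma sums_matrix_entries:
  fixes f :: "nat \<Rightarrow> 'a::real_normed_vector^'i^'j"
  assumes "\<And>a b. (\<lambda>i. f i $ a $ b) sums (x $ a $ b)"
  shows "f sums x"
  using assms unfolding sums_def by (intro vec_tendstoI) simp

lemma mexp_scaleR_sums:
  "(\<lambda>i. (1 / fact i) *\<^sub>R mpow (t *\<^sub>R N) i) sums (\<chi> a b. \<Sum>i. mexp_coeff N a b i * of_real t ^ i)"
proof (rule sums_matrix_entries)
  fix a b
  have "((1 / fact i) *\<^sub>R mpow (t *\<^sub>R N) i) $ a $ b = mexp_coeff N a b i * of_real t ^ i" for i
  proof -
    have "((1 / fact i) *\<^sub>R mpow (t *\<^sub>R N) i) $ a $ b = ((1 / fact i) * t ^ i) *\<^sub>R (mpow N i $ a $ b)"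
      by (simp add: mpow_scaleR)
    also have "\<dots> = mexp_coeff N a b i * of_real t ^ i"
      by (simp add: mexp_coeff_def scaleR_conv_of_real divide_inverse mult_ac)
    finally show ?thesis .
  qed
  then show "(\<lambda>i. ((1 / fact i) *\<^sub>R mpow (t *\<^sub>R N) i) $ a $ b) sums
      (\<chi> a b. \<Sum>i. mexp_coeff N a b i * of_real t ^ i) $ a $ b"
    using summable_sums[OF summable_mexp_coeff] by simp
qed

lemma mexp_scaleR_eq: "mexp (t *\<^sub>R N) = (\<chi> a b. \<Sum>i. mexp_coeff N a b i * of_real t ^ i)"
  unfolding mexp_def by (rule sums_unique[OF mexp_scaleR_sums, symmetric])

lemma mexp_scaleR_commute:
  assumes "C ** N = N ** (C::complex^'n^'n)"
  shows "C ** mexp (t *\<^sub>R N) = mexp (t *\<^sub>R N) ** C"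
proof -
  let ?S = "\<lambda>i. (1 / fact i) *\<^sub>R mpow (t *\<^sub>R N) i"
  have "(\<lambda>i. C ** ?S i) = (\<lambda>i. ?S i ** C)"
    using mpow_commute[OF assms]
    by (simp add: mpow_scaleR matrix_scalar_ac scalar_matrix_assoc[symmetric])
  moreover have "(\<lambda>i. C ** ?S i) sums (C ** mexp (t *\<^sub>R N))"
    using bounded_linear.sums[OF bounded_bilinear.bounded_linear_right[OF bounded_bilinear_matrix_mul]
        mexp_scaleR_sums]
    by (simp add: mexp_scaleR_eq)
  moreover have "(\<lambda>i. ?S i ** C) sums (mexp (t *\<^sub>R N) ** C)"
    using bounded_linear.sums[OF bounded_bilinear.bounded_linear_left[OF bounded_bilinear_matrix_mul]
        mexp_scaleR_sums]
    by (simp add: mexp_scaleR_eq)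
  ultimately show ?thesis
    by (simp add: sums_unique2)
qed

text \<open>Both the entrywise derivative of the exponential series and \<open>N ** mexp (t *\<^sub>R N)\<close>
  are the sum of the shifted series.\<close>
lemma has_vector_derivative_mexp_scaleR:
  fixes N :: "complex^'n^'n"
  shows "((\<lambda>s. mexp (s *\<^sub>R N)) has_vector_derivative N ** mexp (t *\<^sub>R N)) (at t)"
proof -
  let ?S = "\<lambda>i. (1 / fact i) *\<^sub>R (t ^ i *\<^sub>R mpow N (Suc i))"
  define D where "D = (\<chi> a b. \<Sum>i. diffs (mexp_coeff N a b) i * of_real t ^ i)"
  have "((\<lambda>s. mexp (s *\<^sub>R N) $ a $ b) has_vector_derivative D $ a $ b) (at t)" for a b
    unfolding mexp_scaleR_eq D_def vec_lambda_beta
    by (rule has_vector_derivative_real_field termdiffs_strong_converges_everywhere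
        summable_mexp_coeff)+
  then have derivative: "((\<lambda>s. mexp (s *\<^sub>R N)) has_vector_derivative D) (at t)"
    by (simp add: has_vector_derivative_matrix_entries)
  have "?S sums D"
  proof (rule sums_matrix_entries)
    fix a b
    have "?S i $ a $ b = diffs (mexp_coeff N a b) i * of_real t ^ i" for i
    proof -
      have "?S i $ a $ b = ((1 / fact i) * t ^ i) *\<^sub>R (mpow N (Suc i) $ a $ b)"
        by (simp del: mpow.simps)
      also have "\<dots> = diffs (mexp_coeff N a b) i * of_real t ^ i"
        using of_nat_neq_0[of i, where 'a = complex]
        by (simp add: diffs_def mexp_coeff_def scaleR_conv_of_real divide_inverse mult_ac
            del: mpow.simps)
      finally show ?thesis .
    qed
    then show "(\<lambda>i. ?S i $ a $ b) sums D $ a $ b"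
      unfolding D_def vec_lambda_beta
      using summable_sums[OF termdiff_converges_all[OF summable_mexp_coeff]] by simp
  qed
  moreover have "?S sums (N ** mexp (t *\<^sub>R N))"
  proof -
    have "(\<lambda>i. N ** ((1 / fact i) *\<^sub>R mpow (t *\<^sub>R N) i)) sums (N ** mexp (t *\<^sub>R N))"
      using bounded_linear.sums[OF bounded_bilinear.bounded_linear_right[OF bounded_bilinear_matrix_mul]
          mexp_scaleR_sums]
      by (simp add: mexp_scaleR_eq)
    then show ?thesis
      by (simp add: mpow_scaleR matrix_scalar_ac scalar_matrix_assoc[symmetric])
  qed
  ultimately have "D = N ** mexp (t *\<^sub>R N)"
    by (rule sums_unique2)
  with derivative show ?thesis
    by simp
qed

lemma has_vector_derivative_mexp_scaleR_right:
  "((\<lambda>s. mexp (s *\<^sub>R N)) has_vector_derivative mexp (t *\<^sub>R N) ** N) (at t)"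
  using has_vector_derivative_mexp_scaleR[of N t] by (simp add: mexp_scaleR_commute)

lemma has_vector_derivative_mexp_scaleR_minus:
  "((\<lambda>s. mexp ((- s) *\<^sub>R N)) has_vector_derivative - (mexp ((- t) *\<^sub>R N) ** N)) (at t)"
  using has_vector_derivative_mexp_scaleR_right[of "- N" t] by (simp add: matrix_mul_minus_right)

section \<open>Solutions from the Cauchy matrix relations\<close>

locale cauchy_relations =
  fixes \<theta> :: "int \<Rightarrow> 'a::ring_1^'n^'m"
    and \<eta> :: "int \<Rightarrow> 'a^'m^'n"
    and \<Omega> :: "int \<Rightarrow> 'a^'n^'n"
    and P Q \<gamma> :: "'a^'n^'n"
    and k l :: int
  assumes Omega_invertible: "invertible (\<Omega> j)"
    and Omega_shift: "\<Omega> (j + l) = \<Omega> j + \<eta> j ** \<theta> j"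
    and theta_recurrence: "\<theta> (j + k) + \<theta> (j + k - l) = - (\<theta> j ** P)"
    and eta_recurrence: "Q ** \<eta> j = - (\<eta> (j - k) + \<eta> (j - k + l))"
    and Omega_recurrence: "\<Omega> j ** P - Q ** \<Omega> (j + k) = \<gamma> + \<eta> j ** \<theta> (j + k - l)"
begin

abbreviation G :: "int \<Rightarrow> 'a^'n^'n" where
  "G j \<equiv> matrix_inv (\<Omega> j)"

text \<open>In the theorem \<open>U\<close> is \<open>\<phi> - \<phi>0\<close>; the \<open>U'\<close> of \<open>U_equation\<close> is its time derivative.\<close>
abbreviation U :: "int \<Rightarrow> 'a^'m^'m" where
  "U j \<equiv> \<theta> j ** G j ** \<eta> (j - l)"

abbreviation q :: "int \<Rightarrow> 'a^'n^'m" where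
  "q j \<equiv> - (\<theta> j ** G j ** \<gamma>)"

abbreviation r :: "int \<Rightarrow> 'a^'m^'n" where
  "r j \<equiv> - (G (j + l) ** \<eta> j)"

lemma G_cancel:
  "\<Omega> j ** G j = mat 1" "G j ** \<Omega> j = mat 1"
  "X ** \<Omega> j ** G j = X" "Y ** G j ** \<Omega> j = Y"
  by (simp_all add: matrix_inv_right matrix_inv_left Omega_invertible flip: matrix_mul_assoc)

lemma G_shift: "G j = G (j + l) + G (j + l) ** \<eta> j ** \<theta> j ** G j"
proof -
  have "G j = G (j + l) ** \<Omega> (j + l) ** G j"
    by (simp add: G_cancel)
  also have "\<dots> = G (j + l) + G (j + l) ** \<eta> j ** \<theta> j ** G j"
    by (simp add: Omega_shift matrix_distribs matrix_mul_assoc G_cancel)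
  finally show ?thesis .
qed

lemma G_gamma_G:
  assumes "b = a + k - l"
  shows "G a ** \<gamma> ** G b = P ** G b - G a ** Q - G a ** Q ** \<eta> b ** \<theta> b ** G b
    - G a ** \<eta> a ** \<theta> b ** G b"
proof -
  have "a + k = b + l" "a + k - l = b"
    using assms by simp_all
  then have "\<Omega> a ** P - Q ** \<Omega> (b + l) = \<gamma> + \<eta> a ** \<theta> b"
    using Omega_recurrence[of a] by metis
  then have "\<gamma> = \<Omega> a ** P - Q ** (\<Omega> b + \<eta> b ** \<theta> b) - \<eta> a ** \<theta> b"
    unfolding Omega_shift by (simp add: algebra_simps)
  then show ?thesis
    by (simp add: matrix_distribs matrix_mul_assoc G_cancel)
qed

lemma theta_G_gamma_G_eta:
  assumes b: "b = a + k - l"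
  shows "\<theta> a ** G a ** \<gamma> ** G b ** \<eta> (b - l) =
    - (\<theta> (b + l) ** G b ** \<eta> (b - l)) - U b
    + \<theta> a ** G a ** \<eta> (a - l - l) + U a + U a ** U b"
proof -
  have "a + k = b + l" "a + k - l = b" "b - l - k = a - l - l" "b - l - k + l = a - l"
    "b - k = a - l" "b - k + l = a"
    using b by simp_all
  then have theta: "\<theta> a ** P = - (\<theta> (b + l) + \<theta> b)"
    and eta1: "Q ** \<eta> (b - l) = - (\<eta> (a - l - l) + \<eta> (a - l))"
    and eta2: "Q ** \<eta> b = - (\<eta> (a - l) + \<eta> a)"
    using theta_recurrence[of a] eta_recurrence[of "b - l"] eta_recurrence[of b]
    by (metis minus_minus)+
  have "\<theta> a ** G a ** \<gamma> ** G b ** \<eta> (b - l) = \<theta> a ** (G a ** \<gamma> ** G b) ** \<eta> (b - l)"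
    by (simp add: matrix_mul_assoc)
  also have "\<dots> = (\<theta> a ** P) ** G b ** \<eta> (b - l) - \<theta> a ** G a ** (Q ** \<eta> (b - l))
      - \<theta> a ** G a ** (Q ** \<eta> b) ** \<theta> b ** G b ** \<eta> (b - l)
      - \<theta> a ** G a ** \<eta> a ** \<theta> b ** G b ** \<eta> (b - l)"
    unfolding G_gamma_G[OF b] by (simp add: matrix_distribs matrix_mul_assoc)
  also have "\<dots> = - (\<theta> (b + l) ** G b ** \<eta> (b - l)) - U b
      + \<theta> a ** G a ** \<eta> (a - l - l) + U a + U a ** U b"
    unfolding theta eta1 eta2 by (simp add: matrix_distribs matrix_mul_assoc algebra_simps)
  finally show ?thesis .
qed

lemma theta_G_eta_shift:
  "\<theta> (j + l) ** G j ** \<eta> (j - l) = \<theta> (j + l) ** G (j + l) ** \<eta> (j - l)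
    + \<theta> (j + l) ** G (j + l) ** \<eta> j ** U j"
  by (subst G_shift[of j]) (simp add: matrix_distribs matrix_mul_assoc)

lemma U_equation:
  fixes U' :: "int \<Rightarrow> 'a^'m^'m"
  defines "U' j \<equiv> \<theta> (j + l) ** G j ** \<eta> (j - l) - U j ** U j - \<theta> j ** G j ** \<eta> (j - l - l)"
  shows "U' (j + k) - U' j = (q j ** r (j + k - 2 * l) - q (j + l) ** r (j + k - l))
    - (U (j + k) - U j + mat 1) ** (U (j + k) - U (j + k - l))
    + (U (j + l) - U j) ** (U (j + k) - U j + mat 1)"
proof -
  have "G (j + k - 2 * l + l) = G (j + k - l)" "\<eta> (j + k - 2 * l) = \<eta> (j + k - l - l)"
    by (simp_all add: algebra_simps)
  then have q_r1: "q j ** r (j + k - 2 * l) = \<theta> j ** G j ** \<gamma> ** G (j + k - l) ** \<eta> (j + k - l - l)"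
    by (simp add: matrix_mul_minus_left matrix_mul_minus_right matrix_mul_assoc)
  have q_r2: "q (j + l) ** r (j + k - l) = \<theta> (j + l) ** G (j + l) ** \<gamma> ** G (j + k) ** \<eta> (j + k - l)"
    by (simp add: matrix_mul_minus_left matrix_mul_minus_right matrix_mul_assoc)
  have gamma_shift1: "\<theta> j ** G j ** \<gamma> ** G (j + k - l) ** \<eta> (j + k - l - l) =
      - (\<theta> (j + k) ** G (j + k - l) ** \<eta> (j + k - l - l)) - U (j + k - l)
      + \<theta> j ** G j ** \<eta> (j - l - l) + U j + U j ** U (j + k - l)"
    using theta_G_gamma_G_eta[of "j + k - l" j] by simp
  have gamma_shift2: "\<theta> (j + l) ** G (j + l) ** \<gamma> ** G (j + k) ** \<eta> (j + k - l) =
      - (\<theta> (j + k + l) ** G (j + k) ** \<eta> (j + k - l)) - U (j + k)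
      + \<theta> (j + l) ** G (j + l) ** \<eta> (j - l) + U (j + l) + U (j + l) ** U (j + k)"
    using theta_G_gamma_G_eta[of "j + k" "j + l"] by simp
  have eta_shift1: "\<theta> (j + k) ** G (j + k - l) ** \<eta> (j + k - l - l) =
      \<theta> (j + k) ** G (j + k) ** \<eta> (j + k - l - l) + \<theta> (j + k) ** G (j + k) ** \<eta> (j + k - l) ** U (j + k - l)"
    using theta_G_eta_shift[of "j + k - l"] by simp
  have eta_shift2: "\<theta> (j + l) ** G j ** \<eta> (j - l) =
      \<theta> (j + l) ** G (j + l) ** \<eta> (j - l) + \<theta> (j + l) ** G (j + l) ** \<eta> j ** U j"
    by (rule theta_G_eta_shift)
  show ?thesis
    unfolding q_r1 q_r2 gamma_shift1 gamma_shift2 eta_shift1 U'_def eta_shift2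
    by (simp add: matrix_distribs matrix_mul_assoc algebra_simps)
qed

lemma q_equation: "- (\<theta> (j + l) ** G j ** \<gamma>) - U j ** q j = q (j + l) + (U (j + l) - U j) ** q j"
proof -
  have "\<theta> (j + l) ** G j ** \<gamma> = \<theta> (j + l) ** G (j + l) ** \<gamma> + \<theta> (j + l) ** G (j + l) ** \<eta> j ** \<theta> j ** G j ** \<gamma>"
    by (subst G_shift[of j]) (simp add: matrix_distribs matrix_mul_assoc)
  then show ?thesis
    by (simp add: matrix_distribs matrix_mul_assoc algebra_simps)
qed

lemma r_equation:
  "G (j + l) ** \<eta> j ** \<theta> (j + l) ** G (j + l) ** \<eta> j + G (j + l) ** \<eta> (j - l)
    = - r (j - l) - r j ** (U (j + l) - U j)"
proof -
  have "G j ** \<eta> (j - l) = G (j + l) ** \<eta> (j - l) + G (j + l) ** \<eta> j ** \<theta> j ** G j ** \<eta> (j - l)"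
    by (subst G_shift[of j]) (simp add: matrix_distribs matrix_mul_assoc)
  then show ?thesis
    by (simp add: matrix_distribs matrix_mul_assoc algebra_simps)
qed

end

locale cauchy_flow =
  fixes \<theta> :: "real \<Rightarrow> int \<Rightarrow> complex^'n^'m"
    and \<eta> :: "real \<Rightarrow> int \<Rightarrow> complex^'m^'n"
    and \<Omega> :: "real \<Rightarrow> int \<Rightarrow> complex^'n^'n"
    and P Q \<gamma> :: "complex^'n^'n"
    and k l :: int
  assumes relations: "cauchy_relations (\<theta> t) (\<eta> t) (\<Omega> t) P Q \<gamma> k l"
    and theta_derivative: "((\<lambda>s. \<theta> s j) has_vector_derivative \<theta> t (j + l)) (at t)"
    and eta_derivative: "((\<lambda>s. \<eta> s j) has_vector_derivative - \<eta> t (j - l)) (at t)"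
    and Omega_derivative: "((\<lambda>s. \<Omega> s j) has_vector_derivative \<eta> t (j - l) ** \<theta> t j) (at t)"
begin

lemma inverse_Omega_derivative:
  "((\<lambda>s. matrix_inv (\<Omega> s j)) has_vector_derivative
    - (matrix_inv (\<Omega> t j) ** \<eta> t (j - l) ** \<theta> t j ** matrix_inv (\<Omega> t j))) (at t)"
  using has_vector_derivative_matrix_inv[OF cauchy_relations.Omega_invertible[OF relations]
      Omega_derivative]
  by (simp add: matrix_mul_assoc)

lemma theta_inverse_Omega_derivative:
  "((\<lambda>s. \<theta> s j ** matrix_inv (\<Omega> s j)) has_vector_derivative
    \<theta> t (j + l) ** matrix_inv (\<Omega> t j)
    - \<theta> t j ** matrix_inv (\<Omega> t j) ** \<eta> t (j - l) ** \<theta> t j ** matrix_inv (\<Omega> t j)) (at t)"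
  using has_vector_derivative_matrix_mul[OF theta_derivative inverse_Omega_derivative]
  by (simp add: matrix_distribs matrix_mul_assoc)

lemma solves_system:
  assumes \<phi>_def: "\<phi> = (\<lambda>t j. \<phi>0 + \<theta> t j ** matrix_inv (\<Omega> t j) ** \<eta> t (j - l))"
    and q_def: "q = (\<lambda>t j. - (\<theta> t j ** matrix_inv (\<Omega> t j) ** \<gamma>))"
    and r_def: "r = (\<lambda>t j. - (matrix_inv (\<Omega> t (j + l)) ** \<eta> t j))"
  shows "((\<lambda>s. \<phi> s (j + k) - \<phi> s j) has_vector_derivative
         ((q t j ** r t (j + k - 2 * l) - q t (j + l) ** r t (j + k - l))
          - (\<phi> t (j + k) - \<phi> t j + mat 1) ** (\<phi> t (j + k) - \<phi> t (j + k - l))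
          + (\<phi> t (j + l) - \<phi> t j) ** (\<phi> t (j + k) - \<phi> t j + mat 1))) (at t)
    \<and> ((\<lambda>s. q s j) has_vector_derivative (q t (j + l) + (\<phi> t (j + l) - \<phi> t j) ** q t j)) (at t)
    \<and> ((\<lambda>s. r s j) has_vector_derivative (- r t (j - l) - r t j ** (\<phi> t (j + l) - \<phi> t j))) (at t)"
proof -
  interpret cauchy_relations "\<theta> t" "\<eta> t" "\<Omega> t" P Q \<gamma> k l
    by (rule relations)
  have phi_derivative: "((\<lambda>s. \<phi> s i) has_vector_derivative
      \<theta> t (i + l) ** G i ** \<eta> t (i - l) - U i ** U i - \<theta> t i ** G i ** \<eta> t (i - l - l)) (at t)" for i
  proof -
    have "((\<lambda>s. \<theta> s i ** matrix_inv (\<Omega> s i) ** \<eta> s (i - l)) has_vector_derivative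
        \<theta> t (i + l) ** G i ** \<eta> t (i - l) - U i ** U i - \<theta> t i ** G i ** \<eta> t (i - l - l)) (at t)"
      using has_vector_derivative_matrix_mul
          [OF theta_inverse_Omega_derivative[of i t] eta_derivative[of "i - l" t]]
      by (simp add: matrix_distribs matrix_mul_assoc)
    then show ?thesis
      unfolding \<phi>_def by (subst add.commute) (rule has_vector_derivative_add_const[THEN iffD2])
  qed
  show ?thesis
  proof (intro conjI)
    show "((\<lambda>s. \<phi> s (j + k) - \<phi> s j) has_vector_derivative
         ((q t j ** r t (j + k - 2 * l) - q t (j + l) ** r t (j + k - l))
          - (\<phi> t (j + k) - \<phi> t j + mat 1) ** (\<phi> t (j + k) - \<phi> t (j + k - l))
          + (\<phi> t (j + l) - \<phi> t j) ** (\<phi> t (j + k) - \<phi> t j + mat 1))) (at t)"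
      using has_vector_derivative_diff[OF phi_derivative[of "j + k"] phi_derivative[of j],
          unfolded U_equation[of j]]
      by (simp add: \<phi>_def q_def r_def)
    have "((\<lambda>s. q s j) has_vector_derivative - (\<theta> t (j + l) ** G j ** \<gamma>) - U j ** q t j) (at t)"
      unfolding q_def
      using has_vector_derivative_minus[OF has_vector_derivative_matrix_mul_right
          [OF theta_inverse_Omega_derivative[of j t], of \<gamma>]]
      by (simp add: matrix_distribs matrix_mul_assoc)
    then show "((\<lambda>s. q s j) has_vector_derivative (q t (j + l) + (\<phi> t (j + l) - \<phi> t j) ** q t j)) (at t)"
      using q_equation[of j] by (simp add: q_def \<phi>_def)
    have "((\<lambda>s. r s j) has_vector_derivative
        G (j + l) ** \<eta> t (j - l) + G (j + l) ** \<eta> t j ** \<theta> t (j + l) ** G (j + l) ** \<eta> t j) (at t)"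
      unfolding r_def
      using has_vector_derivative_minus[OF has_vector_derivative_matrix_mul
          [OF inverse_Omega_derivative[of "j + l" t] eta_derivative[of j t]]]
      by (simp add: matrix_distribs matrix_mul_assoc)
    then show "((\<lambda>s. r s j) has_vector_derivative (- r t (j - l) - r t j ** (\<phi> t (j + l) - \<phi> t j))) (at t)"
      using r_equation[of j] by (simp add: r_def \<phi>_def add.commute)
  qed
qed

end

section \<open>Exponential solutions of the Cauchy matrix relations\<close>

lemma mpowi_mexp_commute:
  assumes "invertible (M::complex^'n^'n)"
  shows "mpowi M a ** mexp (c *\<^sub>R mpowi M b) = mexp (c *\<^sub>R mpowi M b) ** mpowi M a"
  by (rule mexp_scaleR_commute) (rule mpowi_commute[OF assms])

lemma matrix_mul_mpowi_mexp_commute: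
  assumes "invertible (M::complex^'n^'n)"
  shows "Y ** mpowi M a ** mexp (c *\<^sub>R mpowi M b) = Y ** mexp (c *\<^sub>R mpowi M b) ** mpowi M a"
  by (simp flip: matrix_mul_assoc add: mpowi_mexp_commute[OF assms])

lemma matrix_mul_mpowi_add:
  assumes "invertible (M::'a::field^'n^'n)"
  shows "Y ** mpowi M a ** mpowi M b = Y ** mpowi M (a + b)"
  by (simp flip: matrix_mul_assoc add: mpowi_add[OF assms])

locale exponential_cauchy_data =
  fixes k l :: int
    and P Q \<omega> :: "complex^'n^'n"
    and RP RQ :: "(complex^'n^'n) set"
    and A :: "complex^'n^'n \<Rightarrow> complex^'n^'m"
    and B :: "complex^'n^'n \<Rightarrow> complex^'m^'n"
    and X :: "complex^'n^'n \<Rightarrow> complex^'n^'n \<Rightarrow> complex^'n^'n"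
  assumes RP: "\<Lambda> \<in> RP \<Longrightarrow> invertible \<Lambda> \<and> - (mpowi \<Lambda> k + mpowi \<Lambda> (k - l)) = P"
    and RQ: "\<Lambda>' \<in> RQ \<Longrightarrow> invertible \<Lambda>' \<and> - (mpowi \<Lambda>' k + mpowi \<Lambda>' (k - l)) = Q"
    and X_equation: "\<Lambda> \<in> RP \<Longrightarrow> \<Lambda>' \<in> RQ \<Longrightarrow>
      mpowi \<Lambda>' (- l) ** X \<Lambda>' \<Lambda> ** mpowi \<Lambda> l - X \<Lambda>' \<Lambda> = B \<Lambda>' ** A \<Lambda>"
begin

abbreviation E :: "complex^'n^'n \<Rightarrow> real \<Rightarrow> complex^'n^'n" where
  "E \<Lambda> t \<equiv> mexp (t *\<^sub>R mpowi \<Lambda> l)"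

definition \<theta> :: "real \<Rightarrow> int \<Rightarrow> complex^'n^'m" where
  "\<theta> t j = (\<Sum>\<Lambda>\<in>RP. A \<Lambda> ** E \<Lambda> t ** mpowi \<Lambda> j)"

definition \<eta> :: "real \<Rightarrow> int \<Rightarrow> complex^'m^'n" where
  "\<eta> t j = (\<Sum>\<Lambda>'\<in>RQ. E \<Lambda>' (- t) ** mpowi \<Lambda>' (- j) ** B \<Lambda>')"

abbreviation X_summand :: "complex^'n^'n \<Rightarrow> complex^'n^'n \<Rightarrow> real \<Rightarrow> int \<Rightarrow> int \<Rightarrow> complex^'n^'n" where
  "X_summand \<Lambda> \<Lambda>' t a b \<equiv> E \<Lambda>' (- t) ** mpowi \<Lambda>' (- a) ** X \<Lambda>' \<Lambda> ** E \<Lambda> t ** mpowi \<Lambda> b"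

abbreviation BA_summand :: "complex^'n^'n \<Rightarrow> complex^'n^'n \<Rightarrow> real \<Rightarrow> int \<Rightarrow> int \<Rightarrow> complex^'n^'n" where
  "BA_summand \<Lambda> \<Lambda>' t a b \<equiv> E \<Lambda>' (- t) ** mpowi \<Lambda>' (- a) ** B \<Lambda>' ** A \<Lambda> ** E \<Lambda> t ** mpowi \<Lambda> b"

definition \<Omega> :: "real \<Rightarrow> int \<Rightarrow> complex^'n^'n" where
  "\<Omega> t j = (\<Sum>\<Lambda>\<in>RP. \<Sum>\<Lambda>'\<in>RQ. X_summand \<Lambda> \<Lambda>' t j j) + \<omega>"

lemma RP_invertible: "\<Lambda> \<in> RP \<Longrightarrow> invertible \<Lambda>"
  and RQ_invertible: "\<Lambda>' \<in> RQ \<Longrightarrow> invertible \<Lambda>'"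
  and P_eq: "\<Lambda> \<in> RP \<Longrightarrow> P = - (mpowi \<Lambda> k + mpowi \<Lambda> (k - l))"
  and Q_eq: "\<Lambda>' \<in> RQ \<Longrightarrow> Q = - (mpowi \<Lambda>' k + mpowi \<Lambda>' (k - l))"
  using RP RQ by auto

lemmas summand_simps = matrix_distribs matrix_mul_assoc matrix_mul_mpowi_add mpowi_mexp_commute
  matrix_mul_mpowi_mexp_commute RP_invertible RQ_invertible

lemma BA_summand_eq:
  assumes "\<Lambda> \<in> RP" "\<Lambda>' \<in> RQ"
  shows "BA_summand \<Lambda> \<Lambda>' t a b = X_summand \<Lambda> \<Lambda>' t (a + l) (b + l) - X_summand \<Lambda> \<Lambda>' t a b"
proof -
  have "BA_summand \<Lambda> \<Lambda>' t a b = E \<Lambda>' (- t) ** mpowi \<Lambda>' (- a) ** (B \<Lambda>' ** A \<Lambda>) ** E \<Lambda> t ** mpowi \<Lambda> b"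
    by (simp add: matrix_mul_assoc)
  also have "\<dots> = X_summand \<Lambda> \<Lambda>' t (a + l) (b + l) - X_summand \<Lambda> \<Lambda>' t a b"
    unfolding X_equation[OF assms, symmetric]
    using assms by (simp add: summand_simps algebra_simps del: scaleR_minus_left)
  finally show ?thesis .
qed

lemma X_summand_mul_P:
  assumes "\<Lambda> \<in> RP" "\<Lambda>' \<in> RQ"
  shows "X_summand \<Lambda> \<Lambda>' t a b ** P = - (X_summand \<Lambda> \<Lambda>' t a (b + k) + X_summand \<Lambda> \<Lambda>' t a (b + k - l))"
  unfolding P_eq[OF assms(1)]
  using assms by (simp add: summand_simps algebra_simps del: scaleR_minus_left)

lemma Q_mul_X_summand:
  assumes "\<Lambda> \<in> RP" "\<Lambda>' \<in> RQ"
  shows "Q ** X_summand \<Lambda> \<Lambda>' t a b = - (X_summand \<Lambda> \<Lambda>' t (a - k) b + X_summand \<Lambda> \<Lambda>' t (a - k + l) b)"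
  unfolding Q_eq[OF assms(2)]
  using assms by (simp add: summand_simps algebra_simps del: scaleR_minus_left)

lemma has_vector_derivative_X_summand:
  assumes "\<Lambda> \<in> RP" "\<Lambda>' \<in> RQ"
  shows "((\<lambda>s. X_summand \<Lambda> \<Lambda>' s a b) has_vector_derivative
    X_summand \<Lambda> \<Lambda>' t a (b + l) - X_summand \<Lambda> \<Lambda>' t (a - l) b) (at t)"
proof -
  define F where "F s = E \<Lambda>' (- s) ** mpowi \<Lambda>' (- a) ** X \<Lambda>' \<Lambda>" for s
  have "(F has_vector_derivative - (E \<Lambda>' (- t) ** mpowi \<Lambda>' l) ** mpowi \<Lambda>' (- a) ** X \<Lambda>' \<Lambda>) (at t)"
    unfolding F_def
    by (intro has_vector_derivative_matrix_mul_right has_vector_derivative_mexp_scaleR_minus)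
  then have "((\<lambda>s. F s ** E \<Lambda> s ** mpowi \<Lambda> b) has_vector_derivative
      ((- (E \<Lambda>' (- t) ** mpowi \<Lambda>' l) ** mpowi \<Lambda>' (- a) ** X \<Lambda>' \<Lambda>) ** E \<Lambda> t
        + F t ** (E \<Lambda> t ** mpowi \<Lambda> l)) ** mpowi \<Lambda> b) (at t)"
    by (intro has_vector_derivative_matrix_mul_right has_vector_derivative_matrix_mul
        has_vector_derivative_mexp_scaleR_right)
  then show ?thesis
    unfolding F_def
    using assms by (simp add: summand_simps algebra_simps del: scaleR_minus_left)
qed

lemma eta_mul_theta: "\<eta> t a ** \<theta> t b = (\<Sum>\<Lambda>\<in>RP. \<Sum>\<Lambda>'\<in>RQ. BA_summand \<Lambda> \<Lambda>' t a b)"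
  unfolding \<eta>_def \<theta>_def
  by (simp add: matrix_mul_sum_left matrix_mul_sum_right matrix_mul_assoc sum.swap[where A = RQ])

lemma theta_derivative: "((\<lambda>s. \<theta> s j) has_vector_derivative \<theta> t (j + l)) (at t)"
  unfolding \<theta>_def
proof (rule has_vector_derivative_sum)
  fix \<Lambda> assume "\<Lambda> \<in> RP"
  have "((\<lambda>s. A \<Lambda> ** E \<Lambda> s ** mpowi \<Lambda> j) has_vector_derivative
      A \<Lambda> ** (E \<Lambda> t ** mpowi \<Lambda> l) ** mpowi \<Lambda> j) (at t)"
    by (intro has_vector_derivative_matrix_mul_right has_vector_derivative_matrix_mul_left
        has_vector_derivative_mexp_scaleR_right)
  with \<open>\<Lambda> \<in> RP\<close> show "((\<lambda>s. A \<Lambda> ** E \<Lambda> s ** mpowi \<Lambda> j) has_vector_derivative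
      A \<Lambda> ** E \<Lambda> t ** mpowi \<Lambda> (j + l)) (at t)"
    by (simp add: summand_simps add.commute)
qed

lemma eta_derivative: "((\<lambda>s. \<eta> s j) has_vector_derivative - \<eta> t (j - l)) (at t)"
  unfolding \<eta>_def sum_negf[symmetric]
proof (rule has_vector_derivative_sum)
  fix \<Lambda>' assume "\<Lambda>' \<in> RQ"
  have "((\<lambda>s. E \<Lambda>' (- s) ** mpowi \<Lambda>' (- j) ** B \<Lambda>') has_vector_derivative
      - (E \<Lambda>' (- t) ** mpowi \<Lambda>' l) ** mpowi \<Lambda>' (- j) ** B \<Lambda>') (at t)"
    by (intro has_vector_derivative_matrix_mul_right has_vector_derivative_mexp_scaleR_minus)
  with \<open>\<Lambda>' \<in> RQ\<close> show "((\<lambda>s. E \<Lambda>' (- s) ** mpowi \<Lambda>' (- j) ** B \<Lambda>') has_vector_derivative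
      - (E \<Lambda>' (- t) ** mpowi \<Lambda>' (- (j - l)) ** B \<Lambda>')) (at t)"
    by (simp add: summand_simps del: scaleR_minus_left)
qed

lemma Omega_derivative: "((\<lambda>s. \<Omega> s j) has_vector_derivative \<eta> t (j - l) ** \<theta> t j) (at t)"
  unfolding \<Omega>_def eta_mul_theta has_vector_derivative_add_const
proof (rule has_vector_derivative_sum)+
  fix \<Lambda> \<Lambda>' assume "\<Lambda> \<in> RP" "\<Lambda>' \<in> RQ"
  then show "((\<lambda>s. X_summand \<Lambda> \<Lambda>' s j j) has_vector_derivative BA_summand \<Lambda> \<Lambda>' t (j - l) j) (at t)"
    using has_vector_derivative_X_summand[of \<Lambda> \<Lambda>' j j t] BA_summand_eq[of \<Lambda> \<Lambda>' t "j - l" j] by simp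
qed

lemma Omega_shift: "\<Omega> t (j + l) = \<Omega> t j + \<eta> t j ** \<theta> t j"
proof -
  have "X_summand \<Lambda> \<Lambda>' t (j + l) (j + l) = X_summand \<Lambda> \<Lambda>' t j j + BA_summand \<Lambda> \<Lambda>' t j j"
    if "\<Lambda> \<in> RP" "\<Lambda>' \<in> RQ" for \<Lambda> \<Lambda>'
    using BA_summand_eq[OF that, of t j j] by simp
  then show ?thesis
    unfolding \<Omega>_def eta_mul_theta by (simp add: sum.distrib algebra_simps cong: sum.cong)
qed

lemma theta_recurrence: "\<theta> t (j + k) + \<theta> t (j + k - l) = - (\<theta> t j ** P)"
proof -
  have "A \<Lambda> ** E \<Lambda> t ** mpowi \<Lambda> (j + k) + A \<Lambda> ** E \<Lambda> t ** mpowi \<Lambda> (j + k - l)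
      = - (A \<Lambda> ** E \<Lambda> t ** mpowi \<Lambda> j ** P)" if "\<Lambda> \<in> RP" for \<Lambda>
    unfolding P_eq[OF that] using that by (simp add: summand_simps algebra_simps)
  then show ?thesis
    unfolding \<theta>_def matrix_mul_sum_left sum.distrib[symmetric] sum_negf[symmetric]
    by (rule sum.cong[OF refl])
qed

lemma eta_recurrence: "Q ** \<eta> t j = - (\<eta> t (j - k) + \<eta> t (j - k + l))"
proof -
  have "Q ** (E \<Lambda>' (- t) ** mpowi \<Lambda>' (- j) ** B \<Lambda>') = - (E \<Lambda>' (- t) ** mpowi \<Lambda>' (- (j - k)) ** B \<Lambda>'
      + E \<Lambda>' (- t) ** mpowi \<Lambda>' (- (j - k + l)) ** B \<Lambda>')" if "\<Lambda>' \<in> RQ" for \<Lambda>'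
    unfolding Q_eq[OF that] using that
    by (simp add: summand_simps algebra_simps del: scaleR_minus_left)
  then show ?thesis
    unfolding \<eta>_def matrix_mul_sum_right sum.distrib[symmetric] sum_negf[symmetric]
    by (rule sum.cong[OF refl])
qed

lemma Omega_recurrence:
  "\<Omega> t j ** P - Q ** \<Omega> t (j + k) = (\<omega> ** P - Q ** \<omega>) + \<eta> t j ** \<theta> t (j + k - l)"
proof -
  have "X_summand \<Lambda> \<Lambda>' t j j ** P - Q ** X_summand \<Lambda> \<Lambda>' t (j + k) (j + k) = BA_summand \<Lambda> \<Lambda>' t j (j + k - l)"
    if "\<Lambda> \<in> RP" "\<Lambda>' \<in> RQ" for \<Lambda> \<Lambda>'
  proof -
    have "X_summand \<Lambda> \<Lambda>' t j j ** P - Q ** X_summand \<Lambda> \<Lambda>' t (j + k) (j + k)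
        = - (X_summand \<Lambda> \<Lambda>' t j (j + k) + X_summand \<Lambda> \<Lambda>' t j (j + k - l))
          - - (X_summand \<Lambda> \<Lambda>' t (j + k - k) (j + k) + X_summand \<Lambda> \<Lambda>' t (j + k - k + l) (j + k))"
      unfolding X_summand_mul_P[OF that] Q_mul_X_summand[OF that] ..
    also have "\<dots> = X_summand \<Lambda> \<Lambda>' t (j + l) (j + k - l + l) - X_summand \<Lambda> \<Lambda>' t j (j + k - l)"
      by (simp add: algebra_simps)
    also have "\<dots> = BA_summand \<Lambda> \<Lambda>' t j (j + k - l)"
      by (rule BA_summand_eq[OF that, symmetric])
    finally show ?thesis .
  qed
  then have "(\<Sum>\<Lambda>\<in>RP. \<Sum>\<Lambda>'\<in>RQ. X_summand \<Lambda> \<Lambda>' t j j ** P - Q ** X_summand \<Lambda> \<Lambda>' t (j + k) (j + k))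
      = \<eta> t j ** \<theta> t (j + k - l)"
    unfolding eta_mul_theta by (intro sum.cong) auto
  moreover have "\<Omega> t j ** P - Q ** \<Omega> t (j + k) = (\<Sum>\<Lambda>\<in>RP. \<Sum>\<Lambda>'\<in>RQ.
      X_summand \<Lambda> \<Lambda>' t j j ** P - Q ** X_summand \<Lambda> \<Lambda>' t (j + k) (j + k)) + (\<omega> ** P - Q ** \<omega>)"
    unfolding \<Omega>_def
    by (simp add: matrix_distribs matrix_mul_sum_left matrix_mul_sum_right sum_subtractf algebra_simps
        del: scaleR_minus_left)
  ultimately show ?thesis
    by (simp add: add.commute)
qed

lemma cauchy_flow:
  assumes "\<And>t j. invertible (\<Omega> t j)"
  shows "cauchy_flow \<theta> \<eta> \<Omega> P Q (\<omega> ** P - Q ** \<omega>) k l"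
proof (rule cauchy_flow.intro)
  show "cauchy_relations (\<theta> t) (\<eta> t) (\<Omega> t) P Q (\<omega> ** P - Q ** \<omega>) k l" for t
    by (rule cauchy_relations.intro) (rule assms Omega_shift theta_recurrence eta_recurrence Omega_recurrence)+
qed (rule theta_derivative eta_derivative Omega_derivative)+

end

section \<open>Passing to \<open>W\<close> by telescoping\<close>

lemma sum_int_telescope:
  fixes g :: "int \<Rightarrow> 'a::ab_group_add"
  assumes "a \<le> b + 1"
  shows "(\<Sum>i\<in>{a..b}. g (i + 1) - g i) = g (b + 1) - g a"
proof -
  have "a - 1 \<le> b"
    using assms by simp
  then show ?thesis
  proof (induction b rule: int_ge_induct)
    case (step i)
    then have "{a..i + 1} = insert (i + 1) {a..i}"
      by auto
    with step show ?case
      by simp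
  qed simp
qed

lemma isum_telescope:
  fixes g :: "int \<Rightarrow> 'a::real_vector"
  shows "isum (\<lambda>i. g (i + 1) - g i + c) a b = g (b + 1) - g a + real_of_int (b - a + 1) *\<^sub>R c"
proof -
  have sum_eq: "(\<Sum>i\<in>{a'..b'}. g (i + 1) - g i + c) = g (b' + 1) - g a' + real_of_int (b' - a' + 1) *\<^sub>R c"
    if "a' \<le> b' + 1" for a' b'
    using that by (simp add: sum.distrib sum_int_telescope sum_constant_scaleR)
  show ?thesis
  proof (cases "a \<le> b + 1")
    case True
    then show ?thesis
      by (simp add: isum_def sum_eq)
  next
    case False
    then have "isum (\<lambda>i. g (i + 1) - g i + c) a b
        = - (g (a - 1 + 1) - g (b + 1) + real_of_int (a - 1 - (b + 1) + 1) *\<^sub>R c)"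
      using sum_eq[of "b + 1" "a - 1"] by (simp add: isum_def)
    also have "\<dots> = g (b + 1) - g a + real_of_int (b - a + 1) *\<^sub>R c"
      by (simp add: algebra_simps flip: scaleR_minus_left)
    finally show ?thesis .
  qed
qed

lemma isum_telescope_shifted:
  fixes \<phi> :: "int \<Rightarrow> 'a::real_vector"
  assumes "k \<noteq> 0"
  shows "isum (\<lambda>i. \<phi> (j + i + 1) - \<phi> (j + i) + (1 / real_of_int k) *\<^sub>R c) a b
    = \<phi> (j + b + 1) - \<phi> (j + a) + (real_of_int (b - a + 1) / real_of_int k) *\<^sub>R c"
  using isum_telescope[of "\<lambda>i. \<phi> (j + i)" "(1 / real_of_int k) *\<^sub>R c" a b]
  by (simp add: add.assoc)

lemma W_system_of_phi_system:
  fixes \<phi> W :: "real \<Rightarrow> int \<Rightarrow> complex^'m^'m"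
    and q :: "real \<Rightarrow> int \<Rightarrow> complex^'n^'m" and r :: "real \<Rightarrow> int \<Rightarrow> complex^'m^'n"
  assumes k: "k \<noteq> 0"
    and W_def: "W = (\<lambda>t j. \<phi> t (j + 1) - \<phi> t j + (1 / real_of_int k) *\<^sub>R mat 1)"
    and phi_system: "((\<lambda>s. \<phi> s (j + k) - \<phi> s j) has_vector_derivative
         ((q t j ** r t (j + k - 2 * l) - q t (j + l) ** r t (j + k - l))
          - (\<phi> t (j + k) - \<phi> t j + mat 1) ** (\<phi> t (j + k) - \<phi> t (j + k - l))
          + (\<phi> t (j + l) - \<phi> t j) ** (\<phi> t (j + k) - \<phi> t j + mat 1))) (at t)
    \<and> ((\<lambda>s. q s j) has_vector_derivative
         (q t (j + l) + (\<phi> t (j + l) - \<phi> t j) ** q t j)) (at t)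
    \<and> ((\<lambda>s. r s j) has_vector_derivative
         (- r t (j - l) - r t j ** (\<phi> t (j + l) - \<phi> t j))) (at t)"
  shows "((\<lambda>s. isum (\<lambda>i. W s (j + i)) 0 (k - 1)) has_vector_derivative
         ((q t j ** r t (j + k - 2 * l) - q t (j + l) ** r t (j + k - l))
          - isum (\<lambda>i. W t (j + i)) 0 (k - 1) ** isum (\<lambda>i. W t (j + i)) (k - l) (k - 1)
          + isum (\<lambda>i. W t (j + i)) 0 (l - 1) ** isum (\<lambda>i. W t (j + i)) 0 (k - 1))) (at t)
    \<and> ((\<lambda>s. q s j) has_vector_derivative
         (q t (j + l) + (isum (\<lambda>i. W t (j + i)) 0 (l - 1)
                          - (real_of_int l / real_of_int k) *\<^sub>R mat 1) ** q t j)) (at t)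
    \<and> ((\<lambda>s. r s j) has_vector_derivative
         (- r t (j - l) - r t j ** (isum (\<lambda>i. W t (j + i)) 0 (l - 1)
                          - (real_of_int l / real_of_int k) *\<^sub>R mat 1))) (at t)"
proof -
  have W_sum: "isum (\<lambda>i. W s (j + i)) a b
      = \<phi> s (j + b + 1) - \<phi> s (j + a) + (real_of_int (b - a + 1) / real_of_int k) *\<^sub>R mat 1" for s a b
    unfolding W_def using isum_telescope_shifted[OF k, of "\<phi> s"] by simp
  have Wk: "isum (\<lambda>i. W s (j + i)) 0 (k - 1) = \<phi> s (j + k) - \<phi> s j + mat 1"
    and Wkl: "isum (\<lambda>i. W s (j + i)) (k - l) (k - 1)
      = \<phi> s (j + k) - \<phi> s (j + k - l) + (real_of_int l / real_of_int k) *\<^sub>R mat 1"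
    and Wl: "isum (\<lambda>i. W s (j + i)) 0 (l - 1) = \<phi> s (j + l) - \<phi> s j + (real_of_int l / real_of_int k) *\<^sub>R mat 1"
    for s
    using k by (simp_all add: W_sum add_diff_eq)
  show ?thesis
    unfolding Wk Wkl Wl
  proof (intro conjI)
    show "((\<lambda>s. \<phi> s (j + k) - \<phi> s j + mat 1) has_vector_derivative
         ((q t j ** r t (j + k - 2 * l) - q t (j + l) ** r t (j + k - l))
          - (\<phi> t (j + k) - \<phi> t j + mat 1)
            ** (\<phi> t (j + k) - \<phi> t (j + k - l) + (real_of_int l / real_of_int k) *\<^sub>R mat 1)
          + (\<phi> t (j + l) - \<phi> t j + (real_of_int l / real_of_int k) *\<^sub>R mat 1)
            ** (\<phi> t (j + k) - \<phi> t j + mat 1))) (at t)"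
      using phi_system[THEN conjunct1] unfolding has_vector_derivative_add_const
      by (rule has_vector_derivative_eq_rhs)
        (simp add: matrix_distribs matrix_mul_scaleR_mat1 scaleR_mat1_matrix_mul algebra_simps)
  qed (use phi_system in simp_all)
qed

theorem mainTheorem3:
  fixes k l :: int
    and P Q \<omega> :: "complex^'n^'n"
    and RP RQ :: "(complex^'n^'n) set"
    and A :: "complex^'n^'n \<Rightarrow> complex^'n^'m"
    and B :: "complex^'n^'n \<Rightarrow> complex^'m^'n"
    and X :: "complex^'n^'n \<Rightarrow> complex^'n^'n \<Rightarrow> complex^'n^'n"
    and \<phi>0 :: "complex^'m^'m"
    and \<gamma>1 :: "complex^'n^'n"
    and \<theta> :: "real \<Rightarrow> int \<Rightarrow> complex^'n^'m"
    and \<eta> :: "real \<Rightarrow> int \<Rightarrow> complex^'m^'n"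
    and \<Omega> :: "real \<Rightarrow> int \<Rightarrow> complex^'n^'n"
    and \<phi> :: "real \<Rightarrow> int \<Rightarrow> complex^'m^'m"
    and q :: "real \<Rightarrow> int \<Rightarrow> complex^'n^'m"
    and r :: "real \<Rightarrow> int \<Rightarrow> complex^'m^'n"
    and W :: "real \<Rightarrow> int \<Rightarrow> complex^'m^'m"
  assumes k_pos: "k > 0"
    and RP_fin: "finite RP"
    and RP: "\<And>\<Lambda>. \<Lambda> \<in> RP \<Longrightarrow> invertible \<Lambda> \<and> - (mpowi \<Lambda> k + mpowi \<Lambda> (k - l)) = P"
    and RQ_fin: "finite RQ"
    and RQ: "\<And>\<Lambda>'. \<Lambda>' \<in> RQ \<Longrightarrow> invertible \<Lambda>' \<and> - (mpowi \<Lambda>' k + mpowi \<Lambda>' (k - l)) = Q"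
    and Xeq: "\<And>\<Lambda> \<Lambda>'. \<Lambda> \<in> RP \<Longrightarrow> \<Lambda>' \<in> RQ \<Longrightarrow>
               mpowi \<Lambda>' (- l) ** X \<Lambda>' \<Lambda> ** mpowi \<Lambda> l - X \<Lambda>' \<Lambda> = B \<Lambda>' ** A \<Lambda>"
    and \<gamma>1_def: "\<gamma>1 = \<omega> ** P - Q ** \<omega>"
    and \<theta>_def: "\<theta> = (\<lambda>t j. \<Sum>\<Lambda>\<in>RP. A \<Lambda> ** mexp (t *\<^sub>R mpowi \<Lambda> l) ** mpowi \<Lambda> j)"
    and \<eta>_def: "\<eta> = (\<lambda>t j. \<Sum>\<Lambda>'\<in>RQ. mexp ((- t) *\<^sub>R mpowi \<Lambda>' l) ** mpowi \<Lambda>' (- j) ** B \<Lambda>')"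
    and \<Omega>_def: "\<Omega> = (\<lambda>t j. (\<Sum>\<Lambda>\<in>RP. \<Sum>\<Lambda>'\<in>RQ.
               mexp ((- t) *\<^sub>R mpowi \<Lambda>' l) ** mpowi \<Lambda>' (- j) ** X \<Lambda>' \<Lambda>
                 ** mexp (t *\<^sub>R mpowi \<Lambda> l) ** mpowi \<Lambda> j) + \<omega>)"
    and \<Omega>_inv: "\<And>t j. invertible (\<Omega> t j)"
    and \<phi>_def: "\<phi> = (\<lambda>t j. \<phi>0 + \<theta> t j ** matrix_inv (\<Omega> t j) ** \<eta> t (j - l))"
    and q_def: "q = (\<lambda>t j. - (\<theta> t j ** matrix_inv (\<Omega> t j) ** \<gamma>1))"
    and r_def: "r = (\<lambda>t j. - (matrix_inv (\<Omega> t (j + l)) ** \<eta> t j))"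
    and W_def: "W = (\<lambda>t j. \<phi> t (j + 1) - \<phi> t j + (1 / real_of_int k) *\<^sub>R mat 1)"
  shows
   "(\<forall>t j.
      ((\<lambda>s. \<phi> s (j + k) - \<phi> s j) has_vector_derivative
         ((q t j ** r t (j + k - 2 * l) - q t (j + l) ** r t (j + k - l))
          - (\<phi> t (j + k) - \<phi> t j + mat 1) ** (\<phi> t (j + k) - \<phi> t (j + k - l))
          + (\<phi> t (j + l) - \<phi> t j) ** (\<phi> t (j + k) - \<phi> t j + mat 1))) (at t)
    \<and> ((\<lambda>s. q s j) has_vector_derivative
         (q t (j + l) + (\<phi> t (j + l) - \<phi> t j) ** q t j)) (at t)
    \<and> ((\<lambda>s. r s j) has_vector_derivative
         (- r t (j - l) - r t j ** (\<phi> t (j + l) - \<phi> t j))) (at t))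
  \<and> (\<forall>t j.
      ((\<lambda>s. isum (\<lambda>i. W s (j + i)) 0 (k - 1)) has_vector_derivative
         ((q t j ** r t (j + k - 2 * l) - q t (j + l) ** r t (j + k - l))
          - isum (\<lambda>i. W t (j + i)) 0 (k - 1) ** isum (\<lambda>i. W t (j + i)) (k - l) (k - 1)
          + isum (\<lambda>i. W t (j + i)) 0 (l - 1) ** isum (\<lambda>i. W t (j + i)) 0 (k - 1))) (at t)
    \<and> ((\<lambda>s. q s j) has_vector_derivative
         (q t (j + l) + (isum (\<lambda>i. W t (j + i)) 0 (l - 1)
                          - (real_of_int l / real_of_int k) *\<^sub>R mat 1) ** q t j)) (at t)
    \<and> ((\<lambda>s. r s j) has_vector_derivative
         (- r t (j - l) - r t j ** (isum (\<lambda>i. W t (j + i)) 0 (l - 1)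
                          - (real_of_int l / real_of_int k) *\<^sub>R mat 1))) (at t))"
proof -
  interpret data: exponential_cauchy_data k l P Q \<omega> RP RQ A B X
    using RP RQ Xeq by unfold_locales auto
  have data_eqs: "\<theta> = data.\<theta>" "\<eta> = data.\<eta>" "\<Omega> = data.\<Omega>"
    unfolding \<theta>_def \<eta>_def \<Omega>_def data.\<theta>_def data.\<eta>_def data.\<Omega>_def by (rule refl)+
  have "cauchy_flow \<theta> \<eta> \<Omega> P Q \<gamma>1 k l"
    unfolding data_eqs \<gamma>1_def by (rule data.cauchy_flow) (use \<Omega>_inv data_eqs in simp)
  note system = cauchy_flow.solves_system[OF this \<phi>_def q_def r_def]
  have "k \<noteq> 0"
    using k_pos by simp
  with system show ?thesis
    using W_system_of_phi_system[OF _ W_def system] by blast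
qed

end
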